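(* Fix $a,b\in(0,1)$ and $n\in\mathbb{N}\cup\{\infty\}$. Consider the spread process $\{f_t\}$ with parameters $(\mathcal{P}_n,v_0,\mathcal{P}_n,a,b)$ and let $i_t$ be the index of the truth frontier after round $t$. Then for every $t\ge 1$ the random variable $i_t$ stochastically dominates $\min\{\mathrm{Bin}(t-1,b),\,n\}$, i.e. $\Pr[i_t\ge x]\ge \Pr[\min\{\mathrm{Bin}(t-1,b),n\}\ge x]$ for all real $x$. In particular, there exist constants $K,c_1,c_2,c_3>0$ depending only on $a,b$ such that for all $t\ge1$, $$\Pr\big[i_t\ \ge\ \min\{bt-Kt^{1-c_3},\,n\}\big]\ \ge\ 1-e^{-c_1t^{c_2}}.$$
   Context: Spread process. Fix $a,b\in[0,1]$. Let $G=(V,E)$ be a connected, locally finite, undirected graph (finite or countably infinite), $r\in V$ a root, and $T$ a breadth-first-search (BFS) spanning tree of $G$ rooted at $r$ (i.e. $d_T(r,v)=d_G(r,v)$ for all $v$). Orient $T$ away from $r$; for $v\ne r$ let $p(v)$ be its parent in $T$. The spread process with parameters $(G,r,T,a,b)$ is the random sequence of maps $f_t:V\to\{+1,-1,\bot\}$, $t\in\mathbb{N}$, defined by: $f_t(r)=+1$ for all $t$; $f_0(v)=\bot$ for $v\neq r$; for $t\ge1$ and each $v\ne r$, independently of everything else: if $f_{t-1}(v)=\bot\ne f_{t-1}(p(v))$ then $f_t(v)=f_{t-1}(p(v))$ with probability $1-a$ and $f_t(v)=-f_{t-1}(p(v))$ with probability $a$; if $f_{t-1}(v)\ne\bot$ then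 $f_t(v)=f_{t-1}(p(v))$ with probability $b$ and $f_t(v)=f_{t-1}(v)$ with probability $1-b$; if $f_{t-1}(v)=f_{t-1}(p(v))=\bot$ then $f_t(v)=\bot$. Path. For $n\in\mathbb{N}\cup\{\infty\}$, $\mathcal{P}_n$ is the path with vertices $v_0,v_1,\dots,v_n$ (infinitely many if $n=\infty$), rooted at $v_0$, with $p(v_i)=v_{i-1}$; it is its own BFS tree, and the process on it has parameters $(\mathcal{P}_n,v_0,\mathcal{P}_n,a,b)$. Truth frontier on the path. After round $t$, the truth frontier is the single node $v_{i_t}$ where $i_t=\max\{i: 0\le i\le n,\ f_t(v_0)=f_t(v_1)=\dots=f_t(v_i)=+1\}$. *)

theory Defs
  imports "HOL-Probability.Probability" "HOL-Library.Extended_Real"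
begin

text \<open>Opinion values: +1, -1 and bottom (uninformed).\<close>
datatype opinion = Pos | Neg | Bot

fun flip :: "opinion \<Rightarrow> opinion" where
  "flip Pos = Neg" | "flip Neg = Pos" | "flip Bot = Bot"

text \<open>The path P_n with n :: enat (n = \<infinity> for the infinite path). Vertex v_i is the
  natural number i with enat i \<le> n; configurations are maps nat \<Rightarrow> opinion,
  indices beyond n are permanently Bot. The parent of v_i (i \<ge> 1) is v_(i-1).\<close>

definition spread_init :: "nat \<Rightarrow> opinion" where
  "spread_init = (\<lambda>i. if i = 0 then Pos else Bot)"

definition local_update :: "real \<Rightarrow> real \<Rightarrow> (nat \<Rightarrow> opinion) \<Rightarrow> nat \<Rightarrow> opinion pmf" where
  "local_update a b f i =
     (if f i = Bot \<and> f (i - 1) \<noteq> Bot then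
        map_pmf (\<lambda>c. if c then flip (f (i - 1)) else f (i - 1)) (bernoulli_pmf a)
      else if f i \<noteq> Bot then
        map_pmf (\<lambda>c. if c then f (i - 1) else f i) (bernoulli_pmf b)
      else return_pmf Bot)"

text \<open>Vertices whose value and
  parent value are both Bot stay Bot deterministically, so only the (finitely many)
  active vertices need random choices; the root stays +1.\<close>
definition spread_step :: "enat \<Rightarrow> real \<Rightarrow> real \<Rightarrow> (nat \<Rightarrow> opinion) \<Rightarrow> (nat \<Rightarrow> opinion) pmf" where
  "spread_step n a b f =
     map_pmf (\<lambda>g. g(0 := Pos))
       (Pi_pmf {i. 1 \<le> i \<and> enat i \<le> n \<and> (f i \<noteq> Bot \<or> f (i - 1) \<noteq> Bot)} Bot
          (local_update a b f))"

primrec spread_dist :: "enat \<Rightarrow> real \<Rightarrow> real \<Rightarrow> nat \<Rightarrow> (nat \<Rightarrow> opinion) pmf" where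
  "spread_dist n a b 0 = return_pmf spread_init"
| "spread_dist n a b (Suc t) = bind_pmf (spread_dist n a b t) (spread_step n a b)"

definition truth_frontier :: "enat \<Rightarrow> (nat \<Rightarrow> opinion) \<Rightarrow> nat" where
  "truth_frontier n f = Max {i. enat i \<le> n \<and> (\<forall>j\<le>i. f j = Pos)}"

end

theory Submission
  imports Defs
begin

text \<open>After t rounds exactly the vertices v_0, ..., v_min(t,n) are informed. Let E_s be
  the event that v_0, ..., v_s all hold +1. Once it occurs, E_s persists, since a vertex that
  agrees with its parent keeps its value whatever coin it tosses; and if E_s holds and v_(s+1)
  is already informed, then v_(s+1) copies the +1 of its parent with probability b. Hence
  p_t(s) = Pr[E_s after round t] satisfies p_(t+1)(s+1) \<ge> b p_t(s) + (1 - b) p_t(s+1), the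
  recursion that the binomial tails Pr[Bin(t-1,b) \<ge> s] satisfy with equality, and induction on
  t gives the domination. The concentration bound then follows from Hoeffding's inequality for
  the binomial distribution.\<close>

lemma measure_pmf_prob_bind_pmf:
  "measure_pmf.prob (bind_pmf M N) X = (\<integral>x. measure_pmf.prob (N x) X \<partial>M)"
proof -
  have "ennreal (measure_pmf.prob (bind_pmf M N) X) = (\<integral>\<^sup>+x. emeasure (N x) X \<partial>M)"
    by (simp add: measure_pmf.emeasure_eq_measure[symmetric])
  also have "\<dots> = ennreal (\<integral>x. measure_pmf.prob (N x) X \<partial>M)"
    by (simp add: measure_pmf.emeasure_eq_measure)
       (intro nn_integral_eq_integral measure_pmf.integrable_const_bound[where B=1]; simp)
  finally show ?thesis
    by (simp add: integral_nonneg)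
qed

lemma prob_binomial_pmf_Suc_ge_Suc:
  assumes "0 \<le> p" "p \<le> 1"
  shows "measure_pmf.prob (binomial_pmf (Suc m) p) {k. Suc s \<le> k}
       = p * measure_pmf.prob (binomial_pmf m p) {k. s \<le> k}
         + (1 - p) * measure_pmf.prob (binomial_pmf m p) {k. Suc s \<le> k}"
proof -
  have "binomial_pmf m p \<bind> (\<lambda>k. return_pmf (g k)) = map_pmf g (binomial_pmf m p)"
    for g :: "nat \<Rightarrow> nat"
    by (simp add: map_pmf_def)
  then show ?thesis
    using assms by (simp add: binomial_pmf_Suc measure_pmf_prob_bind_pmf vimage_def algebra_simps)
qed

lemma prob_binomial_pmf_ge_eq_0:
  assumes "0 \<le> p" "p \<le> 1" "m < s"
  shows "measure_pmf.prob (binomial_pmf m p) {k. s \<le> k} = 0"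
  using assms by (auto simp: measure_pmf_zero_iff set_pmf_binomial_eq)

lemma prob_binomial_pmf_lower_tail:
  assumes "0 \<le> p" "p \<le> 1" "0 < m" "0 \<le> \<epsilon>"
  shows "1 - exp (- 2 * \<epsilon>\<^sup>2 / m) \<le> measure_pmf.prob (binomial_pmf m p) {k. m * p - \<epsilon> \<le> real k}"
proof -
  have "measure_pmf.prob (binomial_pmf m p) {k. real k \<le> m * p - \<epsilon>} \<le> exp (- 2 * \<epsilon>\<^sup>2 / m)"
    using assms by (intro binomial_distribution.prob_le) (auto simp: binomial_distribution_def)
  moreover have "1 - measure_pmf.prob (binomial_pmf m p) {k. real k \<le> m * p - \<epsilon>}
      = measure_pmf.prob (binomial_pmf m p) (UNIV - {k. real k \<le> m * p - \<epsilon>})"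
    using measure_pmf.prob_compl[of "{k. real k \<le> m * p - \<epsilon>}" "binomial_pmf m p"] by simp
  moreover have "\<dots> \<le> measure_pmf.prob (binomial_pmf m p) {k. m * p - \<epsilon> \<le> real k}"
    by (intro measure_pmf.finite_measure_mono) auto
  ultimately show ?thesis
    by linarith
qed

lemma prob_binomial_pmf_sublinear_deficit:
  assumes "0 \<le> p" "p \<le> 1" "1 \<le> t"
  shows "1 - exp (- 2 * real t powr (1/2))
       \<le> measure_pmf.prob (binomial_pmf (t - 1) p)
           {k. p * real t - 2 * real t powr (1 - 1/4) \<le> real k}"
proof (cases "t = 1")
  case True
  then have "measure_pmf.prob (binomial_pmf (t - 1) p)
      {k. p * real t - 2 * real t powr (1 - 1/4) \<le> real k} = 1"
    using assms(2) by (subst measure_pmf.prob_eq_1) auto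
  then show ?thesis
    by simp
next
  case False
  define \<epsilon> where "\<epsilon> = 2 * real t powr (3/4) - p"
  have "1 \<le> real t powr (3/4)"
    using assms(3) by (intro ge_one_powr_ge_zero) auto
  then have t34_le: "real t powr (3/4) \<le> \<epsilon>"
    using assms(2) unfolding \<epsilon>_def by simp
  have "real (t - 1) * real t powr (1/2) \<le> real t * real t powr (1/2)"
    by (intro mult_right_mono) auto
  also have "\<dots> = (real t powr (3/4))\<^sup>2"
    using assms(3) by (simp add: power2_eq_square powr_add[symmetric] powr_mult_base)
  also have "\<dots> \<le> \<epsilon>\<^sup>2"
    using t34_le by (intro power_mono) auto
  finally have "real (t - 1) * real t powr (1/2) \<le> \<epsilon>\<^sup>2" .
  then have "real t powr (1/2) \<le> \<epsilon>\<^sup>2 / real (t - 1)"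
    using False assms(3) by (simp add: field_simps)
  then have "1 - exp (- 2 * real t powr (1/2)) \<le> 1 - exp (- 2 * \<epsilon>\<^sup>2 / real (t - 1))"
    by simp
  also have "\<dots> \<le> measure_pmf.prob (binomial_pmf (t - 1) p) {k. real (t - 1) * p - \<epsilon> \<le> real k}"
    using t34_le \<open>1 \<le> real t powr (3/4)\<close> False assms
    by (intro prob_binomial_pmf_lower_tail) auto
  also have "real (t - 1) * p - \<epsilon> = p * real t - 2 * real t powr (1 - 1/4)"
    using assms(3) unfolding \<epsilon>_def by (simp add: of_nat_diff algebra_simps)
  finally show ?thesis .
qed

definition informed_upto :: "enat \<Rightarrow> nat \<Rightarrow> (nat \<Rightarrow> opinion) \<Rightarrow> bool" where
  "informed_upto n t f \<longleftrightarrow> f 0 = Pos \<and> (\<forall>i\<ge>1. f i \<noteq> Bot \<longleftrightarrow> i \<le> t \<and> enat i \<le> n)"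

definition pos_prefix :: "nat \<Rightarrow> (nat \<Rightarrow> opinion) \<Rightarrow> bool" where
  "pos_prefix s f \<longleftrightarrow> (\<forall>j\<le>s. f j = Pos)"

lemma informed_upto_parent_not_Bot:
  assumes "informed_upto n t f" "1 \<le> i" "i \<le> Suc t" "enat i \<le> n"
  shows "f (i - 1) \<noteq> Bot"
proof (cases "i = 1")
  case False
  have "enat (i - 1) \<le> n"
    using assms(4) by (meson diff_le_self enat_ord_simps(1) order_trans)
  then show ?thesis
    using assms False unfolding informed_upto_def by auto
qed (use assms(1) in \<open>simp add: informed_upto_def\<close>)

lemma active_set_eq:
  assumes "informed_upto n t f"
  shows "{i. 1 \<le> i \<and> enat i \<le> n \<and> (f i \<noteq> Bot \<or> f (i - 1) \<noteq> Bot)}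
       = {i. 1 \<le> i \<and> i \<le> Suc t \<and> enat i \<le> n}"
proof -
  have "i \<le> Suc t" if "1 \<le> i" "f i \<noteq> Bot \<or> f (i - 1) \<noteq> Bot" for i
    using assms that unfolding informed_upto_def
    by (cases "i = 1") (auto simp: le_diff_conv)
  then show ?thesis
    using informed_upto_parent_not_Bot[OF assms] by blast
qed

lemma set_pmf_spread_stepE:
  assumes "informed_upto n t f" "g \<in> set_pmf (spread_step n a b f)"
  obtains h where "g = h(0 := Pos)"
    "\<And>i. 1 \<le> i \<Longrightarrow> i \<le> Suc t \<Longrightarrow> enat i \<le> n \<Longrightarrow> h i \<in> set_pmf (local_update a b f i)"
    "\<And>i. \<not> (1 \<le> i \<and> i \<le> Suc t \<and> enat i \<le> n) \<Longrightarrow> h i = Bot"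
proof -
  have fin: "finite {i. 1 \<le> i \<and> i \<le> Suc t \<and> enat i \<le> n}"
    by (rule finite_subset[of _ "{..Suc t}"]) auto
  from assms(2) obtain h where "g = h(0 := Pos)"
    "h \<in> set_pmf (Pi_pmf {i. 1 \<le> i \<and> i \<le> Suc t \<and> enat i \<le> n} Bot (local_update a b f))"
    unfolding spread_step_def active_set_eq[OF assms(1)] by auto
  with that show ?thesis
    unfolding set_Pi_pmf[OF fin] PiE_dflt_def by auto
qed

lemma set_pmf_local_update_not_Bot:
  assumes "f (i - 1) \<noteq> Bot" "x \<in> set_pmf (local_update a b f i)"
  shows "x \<noteq> Bot"
  using assms by (cases "f (i - 1)"; cases "f i") (auto simp: local_update_def)

lemma informed_upto_spread_step:
  assumes "informed_upto n t f" "g \<in> set_pmf (spread_step n a b f)"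
  shows "informed_upto n (Suc t) g"
proof -
  obtain h where h: "g = h(0 := Pos)"
    "\<And>i. 1 \<le> i \<Longrightarrow> i \<le> Suc t \<Longrightarrow> enat i \<le> n \<Longrightarrow> h i \<in> set_pmf (local_update a b f i)"
    "\<And>i. \<not> (1 \<le> i \<and> i \<le> Suc t \<and> enat i \<le> n) \<Longrightarrow> h i = Bot"
    using set_pmf_spread_stepE[OF assms] by blast
  have "h i \<noteq> Bot" if "1 \<le> i" "i \<le> Suc t" "enat i \<le> n" for i
    using set_pmf_local_update_not_Bot informed_upto_parent_not_Bot[OF assms(1)] h(2) that
    by blast
  with h(1,3) show ?thesis
    unfolding informed_upto_def by auto
qed

lemma informed_upto_spread_dist:
  "f \<in> set_pmf (spread_dist n a b t) \<Longrightarrow> informed_upto n t f"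
proof (induction t arbitrary: f)
  case 0
  then show ?case by (auto simp: informed_upto_def spread_init_def)
next
  case (Suc t)
  then show ?case using informed_upto_spread_step by fastforce
qed

lemma pos_prefix_spread_step:
  assumes "informed_upto n t f" "g \<in> set_pmf (spread_step n a b f)"
    and "pos_prefix s f" "enat s \<le> n"
  shows "pos_prefix s g"
proof -
  obtain h where h: "g = h(0 := Pos)"
    "\<And>i. 1 \<le> i \<Longrightarrow> i \<le> Suc t \<Longrightarrow> enat i \<le> n \<Longrightarrow> h i \<in> set_pmf (local_update a b f i)"
    using set_pmf_spread_stepE[OF assms(1,2)] by blast
  have "h j = Pos" if "1 \<le> j" "j \<le> s" for j
  proof -
    have "f j = Pos" "f (j - 1) = Pos"
      using assms(3) that unfolding pos_prefix_def by auto
    moreover have "j \<le> t"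
      using assms(1) \<open>f j = Pos\<close> \<open>1 \<le> j\<close> unfolding informed_upto_def by auto
    moreover have "enat j \<le> n"
      using assms(4) \<open>j \<le> s\<close> by (meson enat_ord_simps(1) order_trans)
    ultimately show ?thesis
      using h(2)[of j] \<open>1 \<le> j\<close> by (auto simp: local_update_def)
  qed
  with h(1) show ?thesis
    unfolding pos_prefix_def by (auto simp: not_less_eq_eq)
qed

lemma spread_step_component:
  assumes "informed_upto n t f" "1 \<le> i" "i \<le> Suc t" "enat i \<le> n"
  shows "map_pmf (\<lambda>g. g i) (spread_step n a b f) = local_update a b f i"
proof -
  have fin: "finite {i. 1 \<le> i \<and> i \<le> Suc t \<and> enat i \<le> n}"
    by (rule finite_subset[of _ "{..Suc t}"]) auto
  have root_irrelevant: "(\<lambda>g. (g(0 := Pos)) i) = (\<lambda>g. g i)"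
    using assms(2) by auto
  show ?thesis
    unfolding spread_step_def active_set_eq[OF assms(1)] map_pmf_comp root_irrelevant
    using assms by (subst Pi_pmf_component[OF fin]) simp_all
qed

text \<open>The hypothesis \<open>Suc s \<le> t\<close> is essential: a vertex informed for the first time copies
  its parent only with probability \<open>1 - a\<close>.\<close>

lemma prob_spread_step_pos_prefix_Suc:
  assumes "informed_upto n t f" "pos_prefix s f" "enat (Suc s) \<le> n" "Suc s \<le> t"
    and "0 \<le> b" "b \<le> 1"
  shows "b \<le> measure_pmf.prob (spread_step n a b f) {g. pos_prefix (Suc s) g}"
proof -
  let ?S = "spread_step n a b f"
  have "f (Suc s) \<noteq> Bot" "f s = Pos"
    using assms(1-4) unfolding informed_upto_def pos_prefix_def by auto
  then have marginal: "map_pmf (\<lambda>g. g (Suc s)) ?S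
      = map_pmf (\<lambda>c. if c then Pos else f (Suc s)) (bernoulli_pmf b)"
    using spread_step_component[OF assms(1), of "Suc s" a b] assms(3,4)
    by (simp add: local_update_def cong: if_cong)
  have "pos_prefix s g" if "g \<in> set_pmf ?S" for g
    using pos_prefix_spread_step[OF assms(1) that assms(2)] assms(3)
    by (meson enat_ord_simps(1) le_SucI order_refl order_trans)
  then have prefix: "AE g in measure_pmf ?S. g (Suc s) = Pos \<longrightarrow> pos_prefix (Suc s) g"
    by (auto simp: AE_measure_pmf_iff pos_prefix_def le_Suc_eq)
  have "b = measure_pmf.prob (bernoulli_pmf b) {True}"
    using assms(5,6) by (simp add: measure_pmf_single)
  also have "\<dots> \<le> measure_pmf.prob (map_pmf (\<lambda>g. g (Suc s)) ?S) {Pos}"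
    unfolding marginal by (auto intro: measure_pmf.finite_measure_mono)
  also have "\<dots> = measure_pmf.prob ?S {g. g (Suc s) = Pos}"
    by (simp add: vimage_def)
  also have "\<dots> \<le> measure_pmf.prob ?S {g. pos_prefix (Suc s) g}"
    using prefix by (intro measure_pmf.finite_measure_mono_AE) auto
  finally show ?thesis .
qed

lemma prob_spread_dist_pos_prefix_0:
  "measure_pmf.prob (spread_dist n a b t) {f. pos_prefix 0 f} = 1"
  by (subst measure_pmf.prob_eq_1)
     (auto simp: AE_measure_pmf_iff pos_prefix_def informed_upto_def dest: informed_upto_spread_dist)

lemma prob_spread_dist_pos_prefix_Suc:
  assumes "0 \<le> b" "b \<le> 1" "enat (Suc s) \<le> n" "Suc s \<le> t"
  shows "b * measure_pmf.prob (spread_dist n a b t) {f. pos_prefix s f}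
         + (1 - b) * measure_pmf.prob (spread_dist n a b t) {f. pos_prefix (Suc s) f}
       \<le> measure_pmf.prob (spread_dist n a b (Suc t)) {f. pos_prefix (Suc s) f}"
proof -
  let ?D = "spread_dist n a b t"
  define h where "h f = b * indicator {f. pos_prefix s f} f
    + (1 - b) * indicator {f. pos_prefix (Suc s) f} f" for f :: "nat \<Rightarrow> opinion"
  have h_le: "h f \<le> measure_pmf.prob (spread_step n a b f) {g. pos_prefix (Suc s) g}"
    if "f \<in> set_pmf ?D" for f
  proof -
    have inf: "informed_upto n t f"
      using that by (rule informed_upto_spread_dist)
    consider "pos_prefix (Suc s) f" | "pos_prefix s f" "\<not> pos_prefix (Suc s) f"
      | "\<not> pos_prefix s f" "\<not> pos_prefix (Suc s) f"
      unfolding pos_prefix_def by (meson le_Suc_eq)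
    then show ?thesis
    proof cases
      case 1
      then have "measure_pmf.prob (spread_step n a b f) {g. pos_prefix (Suc s) g} = 1"
        using pos_prefix_spread_step[OF inf _ 1 assms(3)]
        by (subst measure_pmf.prob_eq_1) (auto simp: AE_measure_pmf_iff)
      with 1 show ?thesis
        by (simp add: h_def pos_prefix_def)
    next
      case 2
      then show ?thesis
        using prob_spread_step_pos_prefix_Suc[OF inf 2(1) assms(3,4,1,2)] by (simp add: h_def)
    qed (simp add: h_def)
  qed
  have "b * measure_pmf.prob ?D {f. pos_prefix s f}
        + (1 - b) * measure_pmf.prob ?D {f. pos_prefix (Suc s) f} = (\<integral>f. h f \<partial>?D)"
    unfolding h_def
    by (subst Bochner_Integration.integral_add)
       (auto intro!: measure_pmf.integrable_const_bound[where B=1])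
  also have "\<dots> \<le> (\<integral>f. measure_pmf.prob (spread_step n a b f) {g. pos_prefix (Suc s) g} \<partial>?D)"
    using h_le assms(1,2)
    by (intro integral_mono_AE measure_pmf.integrable_const_bound[where B=1])
       (auto simp: AE_measure_pmf_iff h_def indicator_def)
  also have "\<dots> = measure_pmf.prob (spread_dist n a b (Suc t)) {f. pos_prefix (Suc s) f}"
    by (simp add: measure_pmf_prob_bind_pmf)
  finally show ?thesis .
qed

lemma prob_binomial_pmf_ge_le_pos_prefix:
  assumes "0 \<le> b" "b \<le> 1" "enat s \<le> n"
  shows "measure_pmf.prob (binomial_pmf m b) {k. s \<le> k}
       \<le> measure_pmf.prob (spread_dist n a b (Suc m)) {f. pos_prefix s f}"
  using assms(3)
proof (induction m arbitrary: s)
  case 0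
  then show ?case
    using prob_binomial_pmf_ge_eq_0[OF assms(1,2)] prob_spread_dist_pos_prefix_0
    by (cases s) (auto simp del: spread_dist.simps)
next
  case (Suc m)
  consider "s = 0" | "Suc m < s" | s' where "s = Suc s'" "s' \<le> m"
    by (cases s) force+
  then show ?case
  proof cases
    case 3
    have s'n: "enat (Suc s') \<le> n"
      using Suc.prems 3(1) by simp
    then have "enat s' \<le> n"
      by (meson enat_ord_simps(1) le_SucI order_refl order_trans)
    then have "measure_pmf.prob (binomial_pmf (Suc m) b) {k. s \<le> k}
        \<le> b * measure_pmf.prob (spread_dist n a b (Suc m)) {f. pos_prefix s' f}
          + (1 - b) * measure_pmf.prob (spread_dist n a b (Suc m)) {f. pos_prefix (Suc s') f}"
      unfolding 3(1) prob_binomial_pmf_Suc_ge_Suc[OF assms(1,2)]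
      using Suc.IH s'n assms(1,2) by (intro add_mono mult_left_mono) auto
    also have "\<dots> \<le> measure_pmf.prob (spread_dist n a b (Suc (Suc m))) {f. pos_prefix s f}"
      unfolding 3(1) using prob_spread_dist_pos_prefix_Suc[OF assms(1,2) s'n, of "Suc m" a] 3(2)
      by simp
    finally show ?thesis .
  qed (use prob_binomial_pmf_ge_eq_0[OF assms(1,2)] prob_spread_dist_pos_prefix_0 in
        \<open>auto simp del: spread_dist.simps\<close>)
qed

lemma pos_prefix_le_truth_frontier:
  assumes "informed_upto n t f" "pos_prefix s f" "enat s \<le> n"
  shows "s \<le> truth_frontier n f"
proof -
  have "i \<le> t" if "\<forall>j\<le>i. f j = Pos" for i
    using assms(1) that[rule_format, of i] unfolding informed_upto_def
    by (cases "i = 0") (auto dest: spec[of _ i])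
  then have "{i. enat i \<le> n \<and> (\<forall>j\<le>i. f j = Pos)} \<subseteq> {..t}"
    by auto
  then have "finite {i. enat i \<le> n \<and> (\<forall>j\<le>i. f j = Pos)}"
    by (rule finite_subset) simp
  with assms(2,3) show ?thesis
    unfolding truth_frontier_def pos_prefix_def by (intro Max_ge) auto
qed

lemma prob_binomial_pmf_le_truth_frontier:
  assumes "0 \<le> b" "b \<le> 1" "1 \<le> t"
  shows "measure_pmf.prob (binomial_pmf (t - 1) b)
           {k. ereal x \<le> min (ereal (real k)) (ereal_of_enat n)}
       \<le> measure_pmf.prob (spread_dist n a b t) {f. x \<le> real (truth_frontier n f)}"
proof (cases "x \<le> 0")
  case True
  then show ?thesis
    by (subst measure_pmf.prob_eq_1[THEN iffD2]) auto
next
  case False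
  define s where "s = nat \<lceil>x\<rceil>"
  have x_le_iff: "x \<le> real k \<longleftrightarrow> s \<le> k" for k
    unfolding s_def using False by (simp add: nat_le_iff ceiling_le_iff)
  show ?thesis
  proof (cases "enat s \<le> n")
    case True
    have "measure_pmf.prob (binomial_pmf (t - 1) b)
            {k. ereal x \<le> min (ereal (real k)) (ereal_of_enat n)}
        \<le> measure_pmf.prob (binomial_pmf (t - 1) b) {k. s \<le> k}"
      by (intro measure_pmf.finite_measure_mono) (auto simp: x_le_iff[symmetric])
    also have "\<dots> \<le> measure_pmf.prob (spread_dist n a b t) {f. pos_prefix s f}"
      using prob_binomial_pmf_ge_le_pos_prefix[OF assms(1,2) True, of "t - 1" a] assms(3)
      by simp
    also have "\<dots> \<le> measure_pmf.prob (spread_dist n a b t) {f. x \<le> real (truth_frontier n f)}"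
      using pos_prefix_le_truth_frontier[OF informed_upto_spread_dist _ True]
      by (intro measure_pmf.finite_measure_mono_AE) (auto simp: AE_measure_pmf_iff x_le_iff)
    finally show ?thesis .
  next
    case False
    then have "\<not> ereal x \<le> ereal_of_enat n"
      using x_le_iff by (cases n) auto
    then show ?thesis
      by simp
  qed
qed

lemma prob_binomial_pmf_le_truth_frontier_min:
  assumes "0 \<le> b" "b \<le> 1" "1 \<le> t"
  shows "measure_pmf.prob (binomial_pmf (t - 1) b) {k. r \<le> real k}
       \<le> measure_pmf.prob (spread_dist n a b t)
           {f. min (ereal r) (ereal_of_enat n) \<le> ereal (real (truth_frontier n f))}"
proof -
  obtain y where y: "min (ereal r) (ereal_of_enat n) = ereal y" "y \<le> r"
    "ereal y \<le> ereal_of_enat n"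
  proof (cases n)
    case (enat N)
    then show ?thesis
      using that[of "min r (real N)"] by (auto simp: min_def)
  qed (use that[of r] in simp)
  have "measure_pmf.prob (binomial_pmf (t - 1) b) {k. r \<le> real k}
      \<le> measure_pmf.prob (binomial_pmf (t - 1) b)
          {k. ereal y \<le> min (ereal (real k)) (ereal_of_enat n)}"
    using y(2,3) by (intro measure_pmf.finite_measure_mono) auto
  also have "\<dots> \<le> measure_pmf.prob (spread_dist n a b t) {f. y \<le> real (truth_frontier n f)}"
    using prob_binomial_pmf_le_truth_frontier[OF assms] .
  finally show ?thesis
    unfolding y(1) by simp
qed

theorem mainTheorem1:
  fixes a b :: real
  assumes "0 < a" "a < 1" "0 < b" "b < 1"
  shows "(\<forall>(n::enat) (t::nat) (x::real). t \<ge> 1 \<longrightarrow>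
            measure_pmf.prob (spread_dist n a b t) {f. x \<le> real (truth_frontier n f)}
            \<ge> measure_pmf.prob (binomial_pmf (t - 1) b)
                 {k. ereal x \<le> min (ereal (real k)) (ereal_of_enat n)})
       \<and> (\<exists>K c1 c2 c3 :: real. K > 0 \<and> c1 > 0 \<and> c2 > 0 \<and> c3 > 0 \<and>
            (\<forall>(n::enat) (t::nat). t \<ge> 1 \<longrightarrow>
              measure_pmf.prob (spread_dist n a b t)
                {f. min (ereal (b * real t - K * real t powr (1 - c3))) (ereal_of_enat n)
                      \<le> ereal (real (truth_frontier n f))}
              \<ge> 1 - exp (- c1 * real t powr c2)))"
proof (intro conjI)
  have b: "0 \<le> b" "b \<le> 1"
    using assms(3,4) by auto
  then show "\<forall>n t x. t \<ge> 1 \<longrightarrow>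
      measure_pmf.prob (spread_dist n a b t) {f. x \<le> real (truth_frontier n f)}
      \<ge> measure_pmf.prob (binomial_pmf (t - 1) b)
           {k. ereal x \<le> min (ereal (real k)) (ereal_of_enat n)}"
    using prob_binomial_pmf_le_truth_frontier by blast
  have "1 - exp (- 2 * real t powr (1/2))
      \<le> measure_pmf.prob (spread_dist n a b t)
          {f. min (ereal (b * real t - 2 * real t powr (1 - 1/4))) (ereal_of_enat n)
                \<le> ereal (real (truth_frontier n f))}" if "1 \<le> t" for n t
    using prob_binomial_pmf_sublinear_deficit[OF b that]
      prob_binomial_pmf_le_truth_frontier_min[OF b that] by (rule order_trans)
  then show "\<exists>K c1 c2 c3 :: real. K > 0 \<and> c1 > 0 \<and> c2 > 0 \<and> c3 > 0 \<and>
      (\<forall>n t. t \<ge> 1 \<longrightarrow>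
        measure_pmf.prob (spread_dist n a b t)
          {f. min (ereal (b * real t - K * real t powr (1 - c3))) (ereal_of_enat n)
                \<le> ereal (real (truth_frontier n f))}
        \<ge> 1 - exp (- c1 * real t powr c2))"
    by (intro exI[of _ 2] exI[of _ "1/2"] exI[of _ "1/4"]) auto
qed

end
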